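(* For $g\in GL_d(\mathbb{Q})$ and $R\ge0$ let $B(g,R)=\{h\in GL_d(\mathbb{Q}) : d(g,h)\le R\}$. Then there exists a constant $C>0$ such that for all $g\in GL_d(\mathbb{Q})$ and all $R\ge0$, $|B(g,R)|\le Ce^{CR}$.
   Context: $\mathcal{P}$ is the set of primes together with $\infty$; $\mathbb{Q}_\infty=\mathbb{R}$. For $v\in\mathbb{Q}_p^d$, $|v|_p=\max_i|v_i|_p$ if $p$ prime ($|\cdot|_p$ the $p$-adic absolute value) and the Euclidean norm if $p=\infty$; $\|g\|_p=\sup_{|v|_p=1}|gv|_p$. $d_p(g,h)=\ln^+\|g^{-1}h\|_p+\ln^+\|h^{-1}g\|_p$ and, for $g,h\in GL_d(\mathbb{Q})$, $d(g,h)=\sum_{p\in\mathcal{P}}d_p(g,h)$. $|\cdot|$ denotes cardinality. *)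

theory Defs
  imports "HOL-Analysis.Analysis" "HOL-Computational_Algebra.Primes"
begin

datatype place = Arch | Fin nat

definition places :: "place set" where
  "places = insert Arch (Fin ` {p. prime p})"

definition padic_abs :: "nat \<Rightarrow> rat \<Rightarrow> real" where
  "padic_abs p x = (if x = 0 then 0 else
     (case quotient_of x of (a, b) \<Rightarrow>
        real p powr (real (multiplicity (int p) b) - real (multiplicity (int p) a))))"

definition padic_vnorm :: "nat \<Rightarrow> rat^'n \<Rightarrow> real" where
  "padic_vnorm p v = Max (range (\<lambda>i. padic_abs p (v $ i)))"

text \<open>Operator norm of a rational matrix at a place.  At infinity: sup over real
  Euclidean unit vectors; at a prime p: sup over (rational, dense in Q_p^d) vectors
  of p-adic max norm 1.\<close>
fun opnorm :: "place \<Rightarrow> rat^'n^'n \<Rightarrow> real" where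
  "opnorm Arch g =
     Sup {norm ((\<chi> i j. real_of_rat (g $ i $ j)) *v v) | v :: real^'n. norm v = 1}"
| "opnorm (Fin p) g =
     Sup {padic_vnorm p (g *v v) | v :: rat^'n. padic_vnorm p v = 1}"

definition lnp :: "real \<Rightarrow> real" where
  "lnp x = max 0 (ln x)"

definition dist_place :: "place \<Rightarrow> rat^'n^'n \<Rightarrow> rat^'n^'n \<Rightarrow> real" where
  "dist_place w g h = lnp (opnorm w (matrix_inv g ** h)) + lnp (opnorm w (matrix_inv h ** g))"

definition dGL :: "rat^'n^'n \<Rightarrow> rat^'n^'n \<Rightarrow> real" where
  "dGL g h = (\<Sum>\<^sub>\<infinity> w\<in>places. dist_place w g h)"

definition GLball :: "rat^'n^'n \<Rightarrow> real \<Rightarrow> (rat^'n^'n) set" where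
  "GLball g R = {h. invertible h \<and> dGL g h \<le> R}"

end

theory Submission imports Defs begin

text \<open>Write k = g\<inverse>h and let a/b, in lowest terms, be an entry of k.  Then
  |a/b| \<le> \<parallel>k\<parallel>_\<infinity> \<le> exp d(g,h), and for every prime p dividing b the entry has p-adic absolute
  value exactly the p-part of b, which is at most \<parallel>k\<parallel>_p; multiplying over these primes gives
  b \<le> exp d(g,h).  So if d(g,h) \<le> R, numerator and denominator of every entry of k are bounded
  by exp 2R, which leaves at most (3 exp 4R)^(d^2) choices for k, and h = gk is determined by k.\<close>

section \<open>The p-adic absolute value\<close>

lemma padic_abs_nonneg: "padic_abs p x \<ge> 0"
  unfolding padic_abs_def by (auto split: prod.split)

lemma padic_abs_one: "p > 0 \<Longrightarrow> padic_abs p 1 = 1"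
  unfolding padic_abs_def by simp

lemma padic_abs_fraction:
  assumes p: "prime p" and a: "a \<noteq> 0" and b: "b \<noteq> 0" and x: "x = of_int a / of_int b"
  shows "padic_abs p x = real p powr (real (multiplicity (int p) b) - real (multiplicity (int p) a))"
proof -
  obtain a0 b0 where q: "quotient_of x = (a0, b0)" by (cases "quotient_of x")
  have x0: "x = of_int a0 / of_int b0" using quotient_of_div[OF q] .
  have b0: "b0 > 0" using quotient_of_denom_pos[OF q] .
  have xn: "x \<noteq> 0" using x a b by simp
  have a0: "a0 \<noteq> 0" using xn x0 by auto
  have "of_int a0 * of_int b = (of_int a * of_int b0 :: rat)"
    using x x0 b b0 by (simp add: field_simps)
  hence "a0 * b = a * b0" by (metis of_int_eq_iff of_int_mult)
  moreover have "prime_elem (int p)" using p by simp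
  ultimately have "multiplicity (int p) a0 + multiplicity (int p) b =
                   multiplicity (int p) a + multiplicity (int p) b0"
    using prime_elem_multiplicity_mult_distrib a0 b a b0 by (metis less_irrefl)
  hence "real (multiplicity (int p) b0) - real (multiplicity (int p) a0) =
         real (multiplicity (int p) b) - real (multiplicity (int p) a)" by linarith
  thus ?thesis using q xn unfolding padic_abs_def by simp
qed

lemma padic_abs_le_pow_multiplicity_denom:
  assumes p: "prime p" and q: "quotient_of x = (a, b)"
  shows "padic_abs p x \<le> real p ^ multiplicity (int p) b"
proof (cases "x = 0")
  case False
  have p1: "real p > 1" using p prime_gt_1_nat by auto
  have "padic_abs p x \<le> real p powr real (multiplicity (int p) b)"
    using False q p1 unfolding padic_abs_def by (auto intro!: powr_mono)
  thus ?thesis using p1 by (simp add: powr_realpow)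
qed (simp add: padic_abs_def)

lemma padic_abs_eq_pow_multiplicity_denom:
  assumes p: "prime p" and q: "quotient_of x = (a, b)" and dvd: "int p dvd b"
  shows "padic_abs p x = real p ^ multiplicity (int p) b"
proof -
  have "\<not> int p dvd a"
    using quotient_of_coprime[OF q] dvd p by (metis coprime_common_divisor not_prime_unit prime_nat_int_transfer)
  hence "a \<noteq> 0" and "multiplicity (int p) a = 0"
    by (auto simp: not_dvd_imp_multiplicity_0)
  moreover have "b > 0" using quotient_of_denom_pos[OF q] .
  ultimately show ?thesis
    using padic_abs_fraction[OF p _ _ quotient_of_div[OF q]] p prime_gt_0_nat
    by (simp add: powr_realpow)
qed

text \<open>The ball |x|_p \<le> p^m consists of the fractions a / (b p^m) with p \<nmid> b; closure
  under sums and products is read off from this description.\<close>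

lemma padic_abs_fraction_le_pow:
  assumes p: "prime p" and b: "\<not> int p dvd b" and x: "x = of_int a / (of_int b * of_nat p ^ m)"
  shows "padic_abs p x \<le> real p ^ m"
proof (cases "a = 0")
  case False
  have p1: "real p > 1" using p prime_gt_1_nat by auto
  have pp: "prime_elem (int p)" using p by simp
  have b0: "b \<noteq> 0" using b by auto
  have "multiplicity (int p) (b * int p ^ m) = multiplicity (int p) b + m"
    using prime_elem_multiplicity_mult_distrib[OF pp, of b "int p ^ m"] b0 pp p
    by (simp add: prime_gt_0_nat multiplicity_same_power prime_elem_not_unit not_dvd_imp_multiplicity_0 b)
  hence "padic_abs p x = real p powr (real m - real (multiplicity (int p) a))"
    using padic_abs_fraction[OF p False, of "b * int p ^ m"] x b0 p
    by (simp add: not_dvd_imp_multiplicity_0 b prime_gt_0_nat)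
  also have "\<dots> \<le> real p powr real m" using p1 by (intro powr_mono) auto
  finally show ?thesis using p1 by (simp add: powr_realpow)
qed (simp add: x padic_abs_def)

lemma padic_abs_le_powE:
  assumes p: "prime p" and bd: "padic_abs p x \<le> real p ^ m"
  obtains a b where "\<not> int p dvd b" "x = of_int a / (of_int b * of_nat p ^ m)"
proof -
  obtain a0 b0 where q: "quotient_of x = (a0, b0)" by (cases "quotient_of x")
  have pp: "prime (int p)" using p by simp
  have p1: "real p > 1" using p prime_gt_1_nat by auto
  define v where "v = multiplicity (int p) b0"
  have "v \<le> m"
  proof (cases "v = 0")
    case False
    hence "int p dvd b0" unfolding v_def by (metis not_dvd_imp_multiplicity_0)
    hence "real p ^ v \<le> real p ^ m"
      using padic_abs_eq_pow_multiplicity_denom[OF p q] bd unfolding v_def by simp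
    with p1 show ?thesis by (rule power_le_imp_le_exp)
  qed simp
  obtain b' where b': "b0 = int p ^ v * b'" "\<not> int p dvd b'"
    using multiplicity_decompose'[of b0 "int p"] quotient_of_denom_pos[OF q] pp unfolding v_def
    by (metis less_irrefl not_prime_unit)
  have "b' \<noteq> 0" using b' by auto
  have "(of_nat p :: rat) ^ m = of_nat p ^ v * of_nat p ^ (m - v)"
    using \<open>v \<le> m\<close> by (simp flip: power_add)
  hence "x = of_int (a0 * int p ^ (m - v)) / (of_int b' * of_nat p ^ m)"
    using quotient_of_div[OF q] b'(1) \<open>b' \<noteq> 0\<close> p by (simp add: field_simps prime_gt_0_nat)
  thus ?thesis using that b'(2) by blast
qed

lemma padic_abs_add_le_pow:
  assumes p: "prime p" and "padic_abs p x \<le> real p ^ m" "padic_abs p y \<le> real p ^ m"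
  shows "padic_abs p (x + y) \<le> real p ^ m"
proof -
  obtain a b where ab: "\<not> int p dvd b" "x = of_int a / (of_int b * of_nat p ^ m)"
    using padic_abs_le_powE[OF p assms(2)] .
  obtain c d where cd: "\<not> int p dvd d" "y = of_int c / (of_int d * of_nat p ^ m)"
    using padic_abs_le_powE[OF p assms(3)] .
  have "b \<noteq> 0" "d \<noteq> 0" "(of_nat p :: rat) ^ m \<noteq> 0" using ab cd p by (auto simp: prime_gt_0_nat)
  hence xy: "x + y = of_int (a * d + c * b) / (of_int (b * d) * of_nat p ^ m)"
    unfolding ab(2) cd(2) by (simp add: field_simps)
  have "\<not> int p dvd b * d" using ab cd p by (simp add: prime_dvd_mult_iff)
  from padic_abs_fraction_le_pow[OF p this xy] show ?thesis .
qed

lemma padic_abs_mult_le_pow: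
  assumes p: "prime p" and "padic_abs p x \<le> real p ^ m" "padic_abs p y \<le> real p ^ n"
  shows "padic_abs p (x * y) \<le> real p ^ (m + n)"
proof -
  obtain a b where ab: "\<not> int p dvd b" "x = of_int a / (of_int b * of_nat p ^ m)"
    using padic_abs_le_powE[OF p assms(2)] .
  obtain c d where cd: "\<not> int p dvd d" "y = of_int c / (of_int d * of_nat p ^ n)"
    using padic_abs_le_powE[OF p assms(3)] .
  have xy: "x * y = of_int (a * c) / (of_int (b * d) * of_nat p ^ (m + n))"
    unfolding ab(2) cd(2) by (simp add: power_add)
  have "\<not> int p dvd b * d" using ab cd p by (simp add: prime_dvd_mult_iff)
  from padic_abs_fraction_le_pow[OF p this xy] show ?thesis .
qed

lemma padic_abs_sum_le_pow:
  assumes p: "prime p" and "\<And>i. i \<in> A \<Longrightarrow> padic_abs p (f i) \<le> real p ^ m"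
  shows "padic_abs p (\<Sum>i\<in>A. f i) \<le> real p ^ m"
  using assms(2)
proof (induction A rule: infinite_finite_induct)
  case (insert i A)
  thus ?case by (simp add: padic_abs_add_le_pow[OF p])
qed (simp_all add: padic_abs_def)

section \<open>Operator norms and matrix entries\<close>

lemma padic_abs_le_padic_vnorm: "padic_abs p (v $ i) \<le> padic_vnorm p v"
  unfolding padic_vnorm_def by (rule Max_ge) auto

lemma padic_vnorm_le_iff: "padic_vnorm p v \<le> c \<longleftrightarrow> (\<forall>i. padic_abs p (v $ i) \<le> c)"
  unfolding padic_vnorm_def by (subst Max_le_iff) auto

lemma padic_vnorm_axis: "prime p \<Longrightarrow> padic_vnorm p (axis j 1) = 1"
  using padic_abs_le_padic_vnorm[of p "axis j 1" j]
  by (auto simp: order.eq_iff padic_vnorm_le_iff axis_def padic_abs_one prime_gt_0_nat)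
     (auto simp: padic_abs_def)

lemma padic_vnorm_mult_le_pow:
  assumes p: "prime p" and k: "\<And>i j. padic_abs p (k $ i $ j) \<le> real p ^ m"
    and v: "padic_vnorm p v \<le> 1"
  shows "padic_vnorm p (k *v v) \<le> real p ^ m"
  unfolding padic_vnorm_le_iff matrix_vector_mult_def
proof (simp, intro allI padic_abs_sum_le_pow[OF p])
  fix i j
  have "padic_abs p (v $ j) \<le> real p ^ 0" using v by (simp add: padic_vnorm_le_iff)
  thus "padic_abs p (k $ i $ j * v $ j) \<le> real p ^ m"
    using padic_abs_mult_le_pow[OF p k] by fastforce
qed

lemma opnorm_Fin_le_pow:
  assumes p: "prime p" and k: "\<And>i j. padic_abs p (k $ i $ j) \<le> real p ^ m"
  shows "opnorm (Fin p) k \<le> real p ^ m"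
  unfolding opnorm.simps
  by (rule cSup_least) (use padic_vnorm_axis[OF p] padic_vnorm_mult_le_pow[OF p k] in auto)

lemma padic_abs_entry_le_opnorm_Fin:
  fixes k :: "rat^'n^'n"
  assumes p: "prime p"
  shows "padic_abs p (k $ i $ j) \<le> opnorm (Fin p) k"
proof -
  define m where "m = Max (range (\<lambda>(i, j). multiplicity (int p) (snd (quotient_of (k $ i $ j)))))"
  have "padic_abs p (k $ i' $ j') \<le> real p ^ m" for i' j'
  proof -
    have "padic_abs p (k $ i' $ j') \<le> real p ^ multiplicity (int p) (snd (quotient_of (k $ i' $ j')))"
      using padic_abs_le_pow_multiplicity_denom[OF p] by (metis prod.collapse)
    also have "\<dots> \<le> real p ^ m"
      using prime_ge_1_nat[OF p] unfolding m_def
      by (intro power_increasing Max_ge) (auto intro!: image_eqI[of _ _ "(i', j')"])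
    finally show ?thesis .
  qed
  hence "bdd_above {padic_vnorm p (k *v v) | v :: rat^'n. padic_vnorm p v = 1}"
    by (intro bdd_aboveI[of _ "real p ^ m"]) (auto intro!: padic_vnorm_mult_le_pow[OF p])
  moreover have "(k *v axis j 1) $ i = k $ i $ j"
    by (simp add: matrix_vector_mult_def axis_def if_distrib cong: if_cong)
  ultimately show ?thesis
    using padic_abs_le_padic_vnorm[of p "k *v axis j 1" i] padic_vnorm_axis[OF p, of j]
    unfolding opnorm.simps by (fastforce intro: order_trans cSup_upper)
qed

lemma abs_entry_le_opnorm_Arch:
  fixes k :: "rat^'n^'n"
  shows "\<bar>real_of_rat (k $ i $ j)\<bar> \<le> opnorm Arch k"
proof -
  define A where "A = (\<chi> i j. real_of_rat (k $ i $ j))"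
  have "(A *v axis j 1) $ i = real_of_rat (k $ i $ j)"
    by (simp add: A_def matrix_vector_mult_def axis_def if_distrib cong: if_cong)
  hence "\<bar>real_of_rat (k $ i $ j)\<bar> \<le> norm (A *v axis j 1)"
    using component_le_norm_cart[of "A *v axis j 1" i] by simp
  also have "\<dots> \<le> opnorm Arch k"
  proof -
    obtain K where K: "\<And>x. norm (A *v x) \<le> norm x * K"
      using bounded_linear.bounded[OF matrix_vector_mul_bounded_linear[of A]] by blast
    show ?thesis
      unfolding opnorm.simps A_def[symmetric]
      by (rule cSup_upper) (use K in \<open>auto simp: bdd_above_def, metis\<close>)
  qed
  finally show ?thesis .
qed

section \<open>Entries of g\<inverse>h are controlled by d(g,h)\<close>

lemma le_exp_lnp:
  assumes "y \<le> x" shows "y \<le> exp (lnp x)"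
proof (cases "x > 0")
  case True
  hence "x \<le> exp (lnp x)" unfolding lnp_def by (metis exp_ln exp_le_cancel_iff max.cobounded2)
  thus ?thesis using assms by linarith
qed (use assms exp_gt_zero[of "lnp x"] in linarith)

lemma lnp_eq_0: "0 \<le> x \<Longrightarrow> x \<le> 1 \<Longrightarrow> lnp x = 0"
  unfolding lnp_def by (cases "x = 0") auto

lemma dist_place_nonneg: "dist_place w g h \<ge> 0"
  unfolding dist_place_def lnp_def by simp

lemma lnp_opnorm_Fin_eq_0:
  fixes k :: "rat^'n^'n"
  assumes p: "prime p" and k: "\<And>i j. \<not> int p dvd snd (quotient_of (k $ i $ j))"
  shows "lnp (opnorm (Fin p) k) = 0"
proof (rule lnp_eq_0)
  show "0 \<le> opnorm (Fin p) k"
    using padic_abs_entry_le_opnorm_Fin[OF p] padic_abs_nonneg order_trans by blast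
  have "padic_abs p (k $ i $ j) \<le> real p ^ 0" for i j
    using padic_abs_le_pow_multiplicity_denom[OF p, of "k $ i $ j"] k[of i j]
    by (metis not_dvd_imp_multiplicity_0 prod.collapse)
  thus "opnorm (Fin p) k \<le> 1" using opnorm_Fin_le_pow[OF p] by fastforce
qed

lemma finite_primes_dvd_denominators: "finite {p::nat. \<exists>i j. int p dvd snd (quotient_of (k $ i $ j))}"
proof -
  have fin: "finite {p::nat. int p dvd b}" if "b > 0" for b
    by (rule finite_subset[of _ "{..nat b}"]) (use that zdvd_imp_le in fastforce)+
  have "finite (\<Union>i j. {p::nat. int p dvd snd (quotient_of (k $ i $ j))})"
    by (simp add: fin quotient_of_denom_pos')
  thus ?thesis by (rule finite_subset[rotated]) blast
qed

lemma dist_place_summable: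
  fixes g h :: "rat^'n^'n"
  shows "(\<lambda>w. dist_place w g h) summable_on places"
proof -
  define S where "S k = {p. \<exists>i j. int p dvd snd (quotient_of (k $ i $ j))}" for k :: "rat^'n^'n"
  define F where "F = places \<inter> insert Arch (Fin ` (S (matrix_inv g ** h) \<union> S (matrix_inv h ** g)))"
  have "dist_place w g h = 0" if w: "w \<in> places - F" for w
  proof -
    obtain p where "w = Fin p" "prime p" "p \<notin> S (matrix_inv g ** h)" "p \<notin> S (matrix_inv h ** g)"
      using w unfolding places_def F_def by blast
    thus ?thesis unfolding dist_place_def S_def by (simp add: lnp_opnorm_Fin_eq_0 del: opnorm.simps)
  qed
  hence "(\<lambda>w. dist_place w g h) summable_on places \<longleftrightarrow> (\<lambda>w. dist_place w g h) summable_on F"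
    by (intro summable_on_cong_neutral) (auto simp: F_def)
  moreover have "finite F" unfolding F_def S_def by (simp add: finite_primes_dvd_denominators)
  ultimately show ?thesis by simp
qed

lemma le_exp_dist_place:
  assumes "y \<le> opnorm w (matrix_inv g ** h)"
  shows "y \<le> exp (dist_place w g h)"
proof -
  have "y \<le> exp (lnp (opnorm w (matrix_inv g ** h)))" by (rule le_exp_lnp[OF assms])
  also have "\<dots> \<le> exp (dist_place w g h)" unfolding dist_place_def lnp_def by simp
  finally show ?thesis .
qed

lemma sum_dist_place_le_dGL:
  fixes g h :: "rat^'n^'n"
  assumes "finite T" "T \<subseteq> places"
  shows "(\<Sum>w\<in>T. dist_place w g h) \<le> dGL g h"
  unfolding dGL_def infsum_finite[OF assms(1), symmetric]
  by (rule infsum_mono2) (use assms dist_place_summable dist_place_nonneg in auto)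

lemma abs_entry_le_exp_dGL:
  fixes g h :: "rat^'n^'n"
  shows "\<bar>real_of_rat ((matrix_inv g ** h) $ i $ j)\<bar> \<le> exp (dGL g h)"
proof -
  have "\<bar>real_of_rat ((matrix_inv g ** h) $ i $ j)\<bar> \<le> exp (dist_place Arch g h)"
    by (rule le_exp_dist_place[OF abs_entry_le_opnorm_Arch])
  also have "\<dots> \<le> exp (dGL g h)"
    using sum_dist_place_le_dGL[of "{Arch}" g h] by (simp add: places_def)
  finally show ?thesis .
qed

lemma denom_eq_prod_padic_abs:
  assumes q: "quotient_of x = (a, b)"
  shows "real_of_int b = (\<Prod>q\<in>prime_factors b. padic_abs (nat q) x)"
proof -
  have "real_of_int b = real_of_int (\<Prod>q\<in>prime_factors b. q ^ multiplicity q b)"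
    using prod_prime_factors[of b] quotient_of_denom_pos[OF q] by simp
  also have "\<dots> = (\<Prod>q\<in>prime_factors b. real_of_int q ^ multiplicity q b)"
    by simp
  also have "\<dots> = (\<Prod>q\<in>prime_factors b. padic_abs (nat q) x)"
  proof (rule prod.cong)
    fix q assume "q \<in> prime_factors b"
    hence "prime (nat q)" "int (nat q) = q" "int (nat q) dvd b"
      by (auto simp: prime_factors_dvd prime_nat_iff_prime intro: prime_ge_0_int)
    thus "real_of_int q ^ multiplicity q b = padic_abs (nat q) x"
      using padic_abs_eq_pow_multiplicity_denom[OF _ q] by (metis of_int_of_nat_eq)
  qed simp
  finally show ?thesis .
qed

lemma denom_entry_le_exp_dGL:
  fixes g h :: "rat^'n^'n"
  assumes q: "quotient_of ((matrix_inv g ** h) $ i $ j) = (a, b)"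
  shows "real_of_int b \<le> exp (dGL g h)"
proof -
  define P where "P = prime_factors b"
  have P: "prime (nat q)" "q \<ge> 0" if "q \<in> P" for q
    using that unfolding P_def by (auto intro: prime_ge_0_int)
  have "real_of_int b = (\<Prod>q\<in>P. padic_abs (nat q) ((matrix_inv g ** h) $ i $ j))"
    unfolding P_def by (rule denom_eq_prod_padic_abs[OF q])
  also have "\<dots> \<le> (\<Prod>q\<in>P. exp (dist_place (Fin (nat q)) g h))"
    using P(1) by (intro prod_mono conjI padic_abs_nonneg le_exp_dist_place padic_abs_entry_le_opnorm_Fin)
  also have "\<dots> = exp (\<Sum>w\<in>(\<lambda>q. Fin (nat q)) ` P. dist_place w g h)"
  proof -
    have "inj_on (\<lambda>q. Fin (nat q)) P"
      using P(2) by (intro inj_onI) (simp add: eq_nat_nat_iff)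
    thus ?thesis by (simp add: exp_sum sum.reindex P_def)
  qed
  also have "\<dots> \<le> exp (dGL g h)"
    using P by (auto intro!: sum_dist_place_le_dGL simp: P_def places_def)
  finally show ?thesis .
qed

section \<open>Counting\<close>

definition rats_of_height :: "int \<Rightarrow> rat set" where
  "rats_of_height N = {x. quotient_of x \<in> {-N..N} \<times> {1..N}}"

lemma rats_of_height_mono: "N \<le> M \<Longrightarrow> rats_of_height N \<subseteq> rats_of_height M"
  unfolding rats_of_height_def by auto

lemma card_rats_of_height:
  "finite (rats_of_height N) \<and> card (rats_of_height N) \<le> nat (2 * N + 1) * nat N"
proof -
  have inj: "inj_on quotient_of (rats_of_height N)"
    by (auto simp: inj_on_def quotient_of_inject)
  have sub: "quotient_of ` rats_of_height N \<subseteq> {-N..N} \<times> {1..N}"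
    by (auto simp: rats_of_height_def)
  have fin: "finite ({-N..N} \<times> {1..N})" by simp
  have "card (rats_of_height N) \<le> card ({-N..N} \<times> {1..N})"
    by (rule card_inj_on_le[OF inj sub fin])
  thus ?thesis using inj_on_finite[OF inj sub fin] by (simp add: card_cartesian_product)
qed

lemma card_rats_of_height_le:
  assumes "1 \<le> B"
  shows "real (card (rats_of_height \<lfloor>B\<rfloor>)) \<le> 3 * B\<^sup>2"
proof -
  define N where "N = \<lfloor>B\<rfloor>"
  have N: "1 \<le> N" "real_of_int N \<le> B" using assms unfolding N_def by (auto simp: le_floor_iff)
  have "real (card (rats_of_height N)) \<le> real (nat (2 * N + 1) * nat N)"
    using card_rats_of_height[of N] by linarith
  also have "\<dots> = (2 * real_of_int N + 1) * real_of_int N" using N by simp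
  also have "\<dots> \<le> 3 * (real_of_int N)\<^sup>2" using N by (simp add: power2_eq_square algebra_simps)
  also have "\<dots> \<le> 3 * B\<^sup>2" using N by (simp add: power_mono)
  finally show ?thesis unfolding N_def .
qed

lemma mem_rats_of_height:
  assumes "\<bar>real_of_rat x\<bar> \<le> E" and "real_of_int (snd (quotient_of x)) \<le> E"
  shows "x \<in> rats_of_height \<lfloor>E\<^sup>2\<rfloor>"
proof -
  obtain a b where q: "quotient_of x = (a, b)" by (cases "quotient_of x")
  have b: "1 \<le> b" "real_of_int b \<le> E" using quotient_of_denom_pos[OF q] assms(2) q by auto
  have "\<bar>real_of_int a\<bar> = \<bar>real_of_rat x\<bar> * real_of_int b"
    using b by (simp add: quotient_of_div[OF q] of_rat_divide abs_divide)
  also have "\<dots> \<le> E\<^sup>2" using assms(1) b by (simp add: power2_eq_square mult_mono)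
  finally have "\<bar>real_of_int a\<bar> \<le> E\<^sup>2" .
  moreover have "real_of_int b \<le> E\<^sup>2"
  proof -
    have "1 \<le> E" using b by linarith
    hence "E \<le> E\<^sup>2" by (simp add: power2_eq_square mult_le_cancel_left1)
    thus ?thesis using b by linarith
  qed
  ultimately have "-a \<le> \<lfloor>E\<^sup>2\<rfloor>" "a \<le> \<lfloor>E\<^sup>2\<rfloor>" "b \<le> \<lfloor>E\<^sup>2\<rfloor>"
    by (simp_all add: le_floor_iff abs_le_iff)
  thus ?thesis using b q unfolding rats_of_height_def by auto
qed

lemma card_matrices_with_entries_in:
  assumes "finite Q"
  shows "finite {k :: 'a^'n^'m. \<forall>i j. k $ i $ j \<in> Q} \<and>
         card {k :: 'a^'n^'m. \<forall>i j. k $ i $ j \<in> Q} \<le> card Q ^ (CARD('m) * CARD('n))"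
proof -
  define M where "M = {k :: 'a^'n^'m. \<forall>i j. k $ i $ j \<in> Q}"
  define entries where "entries = (\<lambda>(k :: 'a^'n^'m) (i, j). k $ i $ j)"
  have inj: "inj_on entries M"
    by (rule inj_onI) (simp add: entries_def vec_eq_iff fun_eq_iff)
  have sub: "entries ` M \<subseteq> PiE UNIV (\<lambda>_. Q)"
    unfolding entries_def M_def by auto
  have fin: "finite (PiE (UNIV :: ('m \<times> 'n) set) (\<lambda>_. Q))"
    using assms by (simp add: finite_PiE)
  have "card M \<le> card (PiE (UNIV :: ('m \<times> 'n) set) (\<lambda>_. Q))"
    by (rule card_inj_on_le[OF inj sub fin])
  thus ?thesis
    using inj_on_finite[OF inj sub fin] unfolding M_def by (simp add: card_PiE card_cartesian_product)
qed

lemma matrix_mul_inv_cancel_left: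
  fixes g :: "'a::semiring_1^'n^'n"
  assumes "invertible g"
  shows "g ** (matrix_inv g ** h) = h"
proof -
  have "g ** matrix_inv g = mat 1"
    using someI_ex[OF assms[unfolded invertible_def]] unfolding matrix_inv_def by blast
  thus ?thesis by (simp add: matrix_mul_assoc)
qed

lemma GLball_subset:
  fixes g :: "rat^'n^'n"
  assumes "invertible g"
  shows "GLball g R \<subseteq> (\<lambda>k. g ** k) ` {k. \<forall>i j. k $ i $ j \<in> rats_of_height \<lfloor>exp (2 * R)\<rfloor>}"
proof
  fix h assume "h \<in> GLball g R"
  hence "(exp (dGL g h))\<^sup>2 \<le> exp (2 * R)"
    by (simp add: GLball_def flip: exp_of_nat_mult)
  have "(matrix_inv g ** h) $ i $ j \<in> rats_of_height \<lfloor>exp (2 * R)\<rfloor>" for i j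
  proof -
    have "(matrix_inv g ** h) $ i $ j \<in> rats_of_height \<lfloor>(exp (dGL g h))\<^sup>2\<rfloor>"
      by (rule mem_rats_of_height[OF abs_entry_le_exp_dGL denom_entry_le_exp_dGL[OF surjective_pairing]])
    also have "\<dots> \<subseteq> rats_of_height \<lfloor>exp (2 * R)\<rfloor>"
      by (intro rats_of_height_mono floor_mono) fact
    finally show ?thesis .
  qed
  thus "h \<in> (\<lambda>k. g ** k) ` {k. \<forall>i j. k $ i $ j \<in> rats_of_height \<lfloor>exp (2 * R)\<rfloor>}"
    using matrix_mul_inv_cancel_left[OF assms, of h] by force
qed

lemma card_GLball_le:
  fixes g :: "rat^'n^'n"
  assumes g: "invertible g" and R: "R \<ge> 0"
  shows "finite (GLball g R) \<and>
         real (card (GLball g R)) \<le> 3 ^ (CARD('n) * CARD('n)) * exp (4 * real (CARD('n) * CARD('n)) * R)"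
proof
  define D where "D = CARD('n) * CARD('n)"
  define S where "S = rats_of_height \<lfloor>exp (2 * R)\<rfloor>"
  define M where "M = {k :: rat^'n^'n. \<forall>i j. k $ i $ j \<in> S}"
  have S: "finite S" "real (card S) \<le> 3 * exp (4 * R)"
    using card_rats_of_height card_rats_of_height_le[of "exp (2 * R)"] R
    by (simp_all add: S_def power2_eq_square flip: exp_add)
  have M: "finite M" "card M \<le> card S ^ D"
    using card_matrices_with_entries_in[OF S(1), where 'n='n and 'm='n] by (simp_all add: M_def D_def)
  have ball: "GLball g R \<subseteq> (\<lambda>k. g ** k) ` M"
    using GLball_subset[OF g] unfolding M_def S_def .
  show "finite (GLball g R)" using finite_subset[OF ball] M(1) by blast
  have "card (GLball g R) \<le> card ((\<lambda>k. g ** k) ` M)" using ball M(1) by (simp add: card_mono)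
  also have "\<dots> \<le> card M" using M(1) by (rule card_image_le)
  finally have "real (card (GLball g R)) \<le> real (card S) ^ D"
    using M(2) by (metis of_nat_le_iff of_nat_power order_trans)
  also have "\<dots> \<le> (3 * exp (4 * R)) ^ D" by (rule power_mono[OF S(2)]) simp
  also have "\<dots> = 3 ^ D * exp (4 * real D * R)"
    by (simp add: power_mult_distrib mult.assoc flip: exp_of_nat_mult)
  finally show "real (card (GLball g R)) \<le> 3 ^ D * exp (4 * real D * R)" unfolding D_def .
qed

theorem lemma4p2:
  shows "\<exists>C::real. C > 0 \<and>
    (\<forall>(g :: rat^'n^'n) (R::real). invertible g \<longrightarrow> R \<ge> 0 \<longrightarrow>
       finite (GLball g R) \<and> real (card (GLball g R)) \<le> C * exp (C * R))"
proof (intro exI conjI allI impI)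
  define D where "D = CARD('n) * CARD('n)"
  define C :: real where "C = 3 ^ D * (4 * real D)"
  have "D \<ge> 1" unfolding D_def by (simp add: Suc_le_eq)
  hence C: "3 ^ D \<le> C" "4 * real D \<le> C" "C > 0" unfolding C_def by simp_all
  thus "C > 0" by simp
  fix g :: "rat^'n^'n" and R :: real
  assume g: "invertible g" and R: "R \<ge> 0"
  show "finite (GLball g R)" using card_GLball_le[OF g R] by simp
  have "real (card (GLball g R)) \<le> 3 ^ D * exp (4 * real D * R)"
    using card_GLball_le[OF g R] unfolding D_def by simp
  also have "\<dots> \<le> C * exp (C * R)"
    using C R by (intro mult_mono) (simp_all add: mult_right_mono)
  finally show "real (card (GLball g R)) \<le> C * exp (C * R)" .
qed

end
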